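(* Let $\mathcal G$ be an ample groupoid and let $B$ be a $\mathbb B$-algebra containing a family of elements $\{t_U : U \text{ a compact open subset of } \mathcal G\}$ such that (1) $t_\varnothing=0$, and (2) $t_U+t_V=t_{U\cup V}$ and $t_U*t_V=t_{UV}$ for all compact open subsets $U,V$ of $\mathcal G$. Then there is a unique $\mathbb B$-algebra homomorphism $\pi:A_{\mathbb B}(\mathcal G)\to B$ with $\pi(1_U)=t_U$ for every compact open subset $U$ of $\mathcal G$.
   Context: $\mathbb B=(\{0,1\},\text{or},\text{and})$ is the Boolean semifield. A $\mathbb B$-algebra is a $\mathbb B$-semimodule which is also a hemiring (commutative additive monoid with $0$, associative multiplication, distributive laws) with $(sa)b=s(ab)=a(sb)$. An ample groupoid is a topological groupoid whose unit space is locally compact Hausdorff and totally disconnected and whose source and range maps $s,r$ are local homeomorphisms (the groupoid need not be Hausdorff). For $U,V\subseteq\mathcal G$, $UV=\{\alpha\beta:\alpha\in U,\beta\in V,s(\alpha)=r(\beta)\}$. The Steinberg algebra $A_{\mathbb B}(\mathcal G)$ is the set of $\mathbb B$-valued functions on $\mathcal G$ that are finite $\mathbb B$-linear combinations of characteristic functions $1_U$ of compact open bisections $U$, with pointwise addition and convolution $(f*g)(\gamma)=\sum_{\alpha\beta=\gamma}f(\alpha)g(\beta)$; its elements are exactly the $1_U$ for $U$ compact open in $\mathcal G$. *)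

theory Defs
  imports "HOL-Analysis.Analysis"
begin

definition groupoid ::
  "'g set \<Rightarrow> ('g \<Rightarrow> 'g) \<Rightarrow> ('g \<Rightarrow> 'g) \<Rightarrow> ('g \<Rightarrow> 'g \<Rightarrow> 'g) \<Rightarrow> ('g \<Rightarrow> 'g) \<Rightarrow> bool"
where
  "groupoid G s r gmul ginv \<longleftrightarrow>
     (\<forall>a\<in>G. s a \<in> G \<and> r a \<in> G \<and> ginv a \<in> G) \<and>
     (\<forall>a\<in>G. s (s a) = s a \<and> r (s a) = s a \<and> s (r a) = r a \<and> r (r a) = r a) \<and>
     (\<forall>a\<in>G. \<forall>b\<in>G. s a = r b \<longrightarrow>
        gmul a b \<in> G \<and> s (gmul a b) = s b \<and> r (gmul a b) = r a) \<and>
     (\<forall>a\<in>G. \<forall>b\<in>G. \<forall>c\<in>G. s a = r b \<longrightarrow> s b = r c \<longrightarrow>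
        gmul (gmul a b) c = gmul a (gmul b c)) \<and>
     (\<forall>a\<in>G. gmul (r a) a = a \<and> gmul a (s a) = a) \<and>
     (\<forall>a\<in>G. s (ginv a) = r a \<and> r (ginv a) = s a \<and>
        gmul a (ginv a) = r a \<and> gmul (ginv a) a = s a)"

definition unit_space :: "'g set \<Rightarrow> ('g \<Rightarrow> 'g) \<Rightarrow> 'g set" where
  "unit_space G s = s ` G"

definition composable :: "'g set \<Rightarrow> ('g \<Rightarrow> 'g) \<Rightarrow> ('g \<Rightarrow> 'g) \<Rightarrow> ('g \<times> 'g) set" where
  "composable G s r = {(a, b). a \<in> G \<and> b \<in> G \<and> s a = r b}"

definition topological_groupoid ::
  "'g topology \<Rightarrow> 'g set \<Rightarrow> ('g \<Rightarrow> 'g) \<Rightarrow> ('g \<Rightarrow> 'g) \<Rightarrow> ('g \<Rightarrow> 'g \<Rightarrow> 'g) \<Rightarrow> ('g \<Rightarrow> 'g) \<Rightarrow> bool"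
where
  "topological_groupoid T G s r gmul ginv \<longleftrightarrow>
     groupoid G s r gmul ginv \<and> topspace T = G \<and>
     continuous_map (subtopology (prod_topology T T) (composable G s r)) T (\<lambda>(a, b). gmul a b) \<and>
     continuous_map T T ginv"

definition totally_disconnected_space :: "'a topology \<Rightarrow> bool" where
  "totally_disconnected_space X \<longleftrightarrow> (\<forall>S. connectedin X S \<longrightarrow> (\<exists>a. S \<subseteq> {a}))"

definition local_homeomorphism :: "'a topology \<Rightarrow> 'b topology \<Rightarrow> ('a \<Rightarrow> 'b) \<Rightarrow> bool" where
  "local_homeomorphism X Y f \<longleftrightarrow> f \<in> topspace X \<rightarrow> topspace Y \<and>
     (\<forall>x\<in>topspace X. \<exists>U. openin X U \<and> x \<in> U \<and> openin Y (f ` U) \<and>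
        homeomorphic_map (subtopology X U) (subtopology Y (f ` U)) f)"

definition ample_groupoid ::
  "'g topology \<Rightarrow> 'g set \<Rightarrow> ('g \<Rightarrow> 'g) \<Rightarrow> ('g \<Rightarrow> 'g) \<Rightarrow> ('g \<Rightarrow> 'g \<Rightarrow> 'g) \<Rightarrow> ('g \<Rightarrow> 'g) \<Rightarrow> bool"
where
  "ample_groupoid T G s r gmul ginv \<longleftrightarrow>
     topological_groupoid T G s r gmul ginv \<and>
     locally_compact_space (subtopology T (unit_space G s)) \<and>
     Hausdorff_space (subtopology T (unit_space G s)) \<and>
     totally_disconnected_space (subtopology T (unit_space G s)) \<and>
     local_homeomorphism T (subtopology T (unit_space G s)) s \<and>
     local_homeomorphism T (subtopology T (unit_space G s)) r"

definition set_prod ::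
  "'g set \<Rightarrow> ('g \<Rightarrow> 'g) \<Rightarrow> ('g \<Rightarrow> 'g) \<Rightarrow> ('g \<Rightarrow> 'g \<Rightarrow> 'g) \<Rightarrow> 'g set \<Rightarrow> 'g set \<Rightarrow> 'g set"
where
  "set_prod G s r gmul U V = {gmul a b | a b. a \<in> U \<and> b \<in> V \<and> s a = r b}"

definition compact_open :: "'g topology \<Rightarrow> 'g set \<Rightarrow> bool" where
  "compact_open T U \<longleftrightarrow> openin T U \<and> compactin T U"

definition compact_open_bisection ::
  "'g topology \<Rightarrow> ('g \<Rightarrow> 'g) \<Rightarrow> ('g \<Rightarrow> 'g) \<Rightarrow> 'g set \<Rightarrow> bool" where
  "compact_open_bisection T s r U \<longleftrightarrow> compact_open T U \<and> inj_on s U \<and> inj_on r U"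

text \<open>Scalars of the Boolean semifield are bool, with addition = or, multiplication = and.
  A B-algebra is given by a carrier, addition, zero, multiplication and scalar action.\<close>

definition B_algebra ::
  "'b set \<Rightarrow> ('b \<Rightarrow> 'b \<Rightarrow> 'b) \<Rightarrow> 'b \<Rightarrow> ('b \<Rightarrow> 'b \<Rightarrow> 'b) \<Rightarrow> (bool \<Rightarrow> 'b \<Rightarrow> 'b) \<Rightarrow> bool"
where
  "B_algebra A add zero mul smul \<longleftrightarrow>
     zero \<in> A \<and>
     (\<forall>x\<in>A. \<forall>y\<in>A. add x y \<in> A \<and> mul x y \<in> A) \<and>
     (\<forall>c x. x \<in> A \<longrightarrow> smul c x \<in> A) \<and>
     \<comment> \<open>commutative additive monoid with 0\<close>
     (\<forall>x\<in>A. \<forall>y\<in>A. add x y = add y x) \<and>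
     (\<forall>x\<in>A. \<forall>y\<in>A. \<forall>z\<in>A. add (add x y) z = add x (add y z)) \<and>
     (\<forall>x\<in>A. add zero x = x) \<and>
     \<comment> \<open>associative multiplication, distributive laws\<close>
     (\<forall>x\<in>A. \<forall>y\<in>A. \<forall>z\<in>A. mul (mul x y) z = mul x (mul y z)) \<and>
     (\<forall>x\<in>A. \<forall>y\<in>A. \<forall>z\<in>A. mul x (add y z) = add (mul x y) (mul x z)) \<and>
     (\<forall>x\<in>A. \<forall>y\<in>A. \<forall>z\<in>A. mul (add x y) z = add (mul x z) (mul y z)) \<and>
     \<comment> \<open>B-semimodule axioms\<close>
     (\<forall>c d. \<forall>x\<in>A. smul (c \<or> d) x = add (smul c x) (smul d x)) \<and>
     (\<forall>c. \<forall>x\<in>A. \<forall>y\<in>A. smul c (add x y) = add (smul c x) (smul c y)) \<and>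
     (\<forall>c d. \<forall>x\<in>A. smul (c \<and> d) x = smul c (smul d x)) \<and>
     (\<forall>x\<in>A. smul True x = x) \<and>
     (\<forall>x\<in>A. smul False x = zero) \<and>
     (\<forall>c. smul c zero = zero) \<and>
     \<comment> \<open>compatibility (s a) b = s (a b) = a (s b)\<close>
     (\<forall>c. \<forall>x\<in>A. \<forall>y\<in>A. mul (smul c x) y = smul c (mul x y) \<and> smul c (mul x y) = mul x (smul c y))"

definition B_algebra_hom ::
  "'a set \<Rightarrow> ('a \<Rightarrow> 'a \<Rightarrow> 'a) \<Rightarrow> 'a \<Rightarrow> ('a \<Rightarrow> 'a \<Rightarrow> 'a) \<Rightarrow> (bool \<Rightarrow> 'a \<Rightarrow> 'a) \<Rightarrow>
   'b set \<Rightarrow> ('b \<Rightarrow> 'b \<Rightarrow> 'b) \<Rightarrow> 'b \<Rightarrow> ('b \<Rightarrow> 'b \<Rightarrow> 'b) \<Rightarrow> (bool \<Rightarrow> 'b \<Rightarrow> 'b) \<Rightarrow>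
   ('a \<Rightarrow> 'b) \<Rightarrow> bool"
where
  "B_algebra_hom A addA zeroA mulA smulA B addB zeroB mulB smulB \<pi> \<longleftrightarrow>
     (\<forall>x\<in>A. \<pi> x \<in> B) \<and>
     \<pi> zeroA = zeroB \<and>
     (\<forall>x\<in>A. \<forall>y\<in>A. \<pi> (addA x y) = addB (\<pi> x) (\<pi> y)) \<and>
     (\<forall>x\<in>A. \<forall>y\<in>A. \<pi> (mulA x y) = mulB (\<pi> x) (\<pi> y)) \<and>
     (\<forall>c. \<forall>x\<in>A. \<pi> (smulA c x) = smulB c (\<pi> x))"

definition char_fun :: "'g set \<Rightarrow> 'g \<Rightarrow> bool" where
  "char_fun U = (\<lambda>x. x \<in> U)"

text \<open>Finite B-linear combinations of characteristic functions of compact open bisections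
  (sums in B are disjunctions).\<close>
definition steinberg :: "'g topology \<Rightarrow> ('g \<Rightarrow> 'g) \<Rightarrow> ('g \<Rightarrow> 'g) \<Rightarrow> ('g \<Rightarrow> bool) set" where
  "steinberg T s r = {f. \<exists>F c. finite F \<and> (\<forall>U\<in>F. compact_open_bisection T s r U) \<and>
       f = (\<lambda>x. \<exists>U\<in>F. c U \<and> char_fun U x)}"

definition st_add :: "('g \<Rightarrow> bool) \<Rightarrow> ('g \<Rightarrow> bool) \<Rightarrow> 'g \<Rightarrow> bool" where
  "st_add f g = (\<lambda>x. f x \<or> g x)"

definition st_zero :: "'g \<Rightarrow> bool" where
  "st_zero = (\<lambda>x. False)"

definition st_smul :: "bool \<Rightarrow> ('g \<Rightarrow> bool) \<Rightarrow> 'g \<Rightarrow> bool" where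
  "st_smul c f = (\<lambda>x. c \<and> f x)"

text \<open>Convolution: (f * g)(x) = sum over a b = x of f a g b; in B the sum is a disjunction.\<close>
definition st_conv ::
  "'g set \<Rightarrow> ('g \<Rightarrow> 'g) \<Rightarrow> ('g \<Rightarrow> 'g) \<Rightarrow> ('g \<Rightarrow> 'g \<Rightarrow> 'g) \<Rightarrow>
   ('g \<Rightarrow> bool) \<Rightarrow> ('g \<Rightarrow> bool) \<Rightarrow> 'g \<Rightarrow> bool" where
  "st_conv G s r gmul f g = (\<lambda>x. \<exists>a\<in>G. \<exists>b\<in>G. s a = r b \<and> gmul a b = x \<and> f a \<and> g b)"

end

theory Submission
  imports Defs
begin

text \<open>Over \<open>\<B>\<close> every function is the characteristic function of its support, and an element
  of the Steinberg algebra has compact open support (a finite union of compact open bisections).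
  Addition, convolution and scalar multiplication of such functions correspond to union,
  the product \<open>UV\<close> of supports, and \<open>U \<mapsto> U\<close> or \<open>U \<mapsto> \<emptyset>\<close>. Hence \<open>\<pi> f = t (supp f)\<close> is
  forced by \<open>\<pi> (1\<^sub>U) = t\<^sub>U\<close>, and the hypotheses on \<open>t\<close> say exactly that it is a homomorphism.\<close>

lemma char_fun_Collect: "char_fun (Collect f) = f"
  by (simp add: char_fun_def)

lemma compact_open_Collect_steinberg:
  assumes "f \<in> steinberg T s r"
  shows "compact_open T (Collect f)"
proof -
  obtain F c where F: "finite F" "\<forall>U\<in>F. compact_open_bisection T s r U"
    and f: "f = (\<lambda>x. \<exists>U\<in>F. c U \<and> char_fun U x)"
    using assms unfolding steinberg_def by blast
  have "Collect f = \<Union>{U\<in>F. c U}"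
    using f by (auto simp: char_fun_def)
  moreover have "openin T (\<Union>{U\<in>F. c U})" "compactin T (\<Union>{U\<in>F. c U})"
    using F by (auto intro!: openin_Union compactin_Union
        simp: compact_open_bisection_def compact_open_def)
  ultimately show ?thesis
    by (simp add: compact_open_def)
qed

lemma Collect_st_add: "Collect (st_add f g) = Collect f \<union> Collect g"
  by (auto simp: st_add_def)

lemma Collect_st_smul: "Collect (st_smul c f) = (if c then Collect f else {})"
  by (auto simp: st_smul_def)

lemma Collect_st_conv:
  assumes "Collect f \<subseteq> G" "Collect g \<subseteq> G"
  shows "Collect (st_conv G s r gmul f g) = set_prod G s r gmul (Collect f) (Collect g)"
  using assms by (auto simp: st_conv_def set_prod_def)

lemma B_algebra_smul_eq:
  assumes "B_algebra B add zero mul smul" "x \<in> B"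
  shows "smul c x = (if c then x else zero)"
  using assms unfolding B_algebra_def by (cases c) auto

lemma B_algebra_hom_steinberg_support:
  assumes "topspace T = G"
    and "B_algebra B add zero mul smul"
    and t_in: "\<forall>U. compact_open T U \<longrightarrow> t U \<in> B"
    and t_empty: "t {} = zero"
    and t_add: "\<forall>U V. compact_open T U \<longrightarrow> compact_open T V \<longrightarrow> add (t U) (t V) = t (U \<union> V)"
    and t_mul: "\<forall>U V. compact_open T U \<longrightarrow> compact_open T V \<longrightarrow>
           mul (t U) (t V) = t (set_prod G s r gmul U V)"
  shows "B_algebra_hom (steinberg T s r) st_add st_zero (st_conv G s r gmul) st_smul
           B add zero mul smul (\<lambda>f. t (Collect f))"
  unfolding B_algebra_hom_def
proof (intro conjI ballI allI)
  fix f g assume f: "f \<in> steinberg T s r" and g: "g \<in> steinberg T s r"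
  note co = compact_open_Collect_steinberg[OF f] compact_open_Collect_steinberg[OF g]
  have "Collect f \<subseteq> G" "Collect g \<subseteq> G"
    using co \<open>topspace T = G\<close> by (auto simp: compact_open_def dest: openin_subset)
  then show "t (Collect (st_conv G s r gmul f g)) = mul (t (Collect f)) (t (Collect g))"
    using t_mul co by (simp add: Collect_st_conv)
  show "t (Collect (st_add f g)) = add (t (Collect f)) (t (Collect g))"
    using t_add co by (simp add: Collect_st_add)
next
  fix c f assume "f \<in> steinberg T s r"
  then have "t (Collect f) \<in> B"
    using t_in compact_open_Collect_steinberg by blast
  then show "t (Collect (st_smul c f)) = smul c (t (Collect f))"
    using B_algebra_smul_eq[OF \<open>B_algebra B add zero mul smul\<close>] t_empty
    by (simp add: Collect_st_smul)
next
  fix f assume "f \<in> steinberg T s r"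
  then show "t (Collect f) \<in> B"
    using t_in compact_open_Collect_steinberg by blast
qed (simp add: t_empty st_zero_def)

lemma steinberg_hom_eq_support:
  assumes "\<forall>U. compact_open T U \<longrightarrow> \<pi> (char_fun U) = t U"
    and "f \<in> steinberg T s r"
  shows "\<pi> f = t (Collect f)"
  using assms compact_open_Collect_steinberg[OF assms(2)] by (metis char_fun_Collect)

theorem corollary2p5:
  fixes T :: "'g topology" and G :: "'g set"
    and s r :: "'g \<Rightarrow> 'g" and gmul :: "'g \<Rightarrow> 'g \<Rightarrow> 'g" and ginv :: "'g \<Rightarrow> 'g"
    and B :: "'b set" and add :: "'b \<Rightarrow> 'b \<Rightarrow> 'b" and zero :: 'b
    and mul :: "'b \<Rightarrow> 'b \<Rightarrow> 'b" and smul :: "bool \<Rightarrow> 'b \<Rightarrow> 'b"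
    and t :: "'g set \<Rightarrow> 'b"
  assumes "ample_groupoid T G s r gmul ginv"
    and "B_algebra B add zero mul smul"
    and "\<forall>U. compact_open T U \<longrightarrow> t U \<in> B"
    and "t {} = zero"
    and "\<forall>U V. compact_open T U \<longrightarrow> compact_open T V \<longrightarrow> add (t U) (t V) = t (U \<union> V)"
    and "\<forall>U V. compact_open T U \<longrightarrow> compact_open T V \<longrightarrow>
           mul (t U) (t V) = t (set_prod G s r gmul U V)"
  shows "\<exists>\<pi>. B_algebra_hom (steinberg T s r) st_add st_zero (st_conv G s r gmul) st_smul
                B add zero mul smul \<pi>
           \<and> (\<forall>U. compact_open T U \<longrightarrow> \<pi> (char_fun U) = t U)
           \<and> (\<forall>\<pi>'. B_algebra_hom (steinberg T s r) st_add st_zero (st_conv G s r gmul) st_smul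
                     B add zero mul smul \<pi>'
                  \<and> (\<forall>U. compact_open T U \<longrightarrow> \<pi>' (char_fun U) = t U)
                  \<longrightarrow> (\<forall>f\<in>steinberg T s r. \<pi>' f = \<pi> f))"
proof (intro exI conjI allI impI ballI)
  have "topspace T = G"
    using assms(1) by (simp add: ample_groupoid_def topological_groupoid_def)
  then show "B_algebra_hom (steinberg T s r) st_add st_zero (st_conv G s r gmul) st_smul
               B add zero mul smul (\<lambda>f. t (Collect f))"
    using assms(2-) by (rule B_algebra_hom_steinberg_support)
next
  fix U :: "'g set"
  show "t (Collect (char_fun U)) = t U"
    by (simp add: char_fun_def)
next
  fix \<pi>' f
  assume "B_algebra_hom (steinberg T s r) st_add st_zero (st_conv G s r gmul) st_smul
            B add zero mul smul \<pi>' \<and> (\<forall>U. compact_open T U \<longrightarrow> \<pi>' (char_fun U) = t U)"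
    and "f \<in> steinberg T s r"
  then show "\<pi>' f = t (Collect f)"
    using steinberg_hom_eq_support by blast
qed

end
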